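(* Let $L$ be a flat layout. There exists a tuple morphism $f$ with $L_f=L$ if and only if $L$ is tractable.
   Context: $\langle n\rangle_*=\{*,1,\dots,n\}$. A tuple morphism $f:(s_1,\dots,s_m)\to(t_1,\dots,t_n)$ between tuples of positive integers is given by a pointed map $\alpha:\langle m\rangle_*\to\langle n\rangle_*$ ($\alpha( * )=*$) such that each $j\in\{1,\dots,n\}$ has at most one preimage and $s_i=t_{\alpha(i)}$ whenever $\alpha(i)\ne*$. Its encoded flat layout is $L_f=(s_1,\dots,s_m):(d_1,\dots,d_m)$ with $d_i=0$ if $\alpha(i)=*$ and $d_i=\prod_{j<\alpha(i)}t_j$ otherwise. A flat layout is a pair $(s_1,\dots,s_m):(d_1,\dots,d_m)$ of a tuple of positive integers and a tuple of nonnegative integers of the same length, with modes $s_i:d_i$. Order modes by $s:d\preceq s':d'$ iff $d<d'$ or ($d=d'$ and $s\le s'$); $\mathrm{sort}(L)$ is the stable reordering of the modes into $\preceq$-nondecreasing order. $L$ is tractable if, writing $\mathrm{sort}(L)=(s'_1,\dots,s'_m):(d'_1,\dots,d'_m)$, for each $1\le i<m$ either $d'_i=0$ or $s'_id'_i$ divides $d'_{i+1}$. *)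

theory Defs
  imports Main "HOL-Library.Product_Lexorder"
begin

text \<open>Positions are 1-indexed as in the paper: the i-th entry of a list xs is xs ! (i - 1).
  The pointed set \<langle>n\<rangle>_* = {*,1,...,n} is modelled by {0,1,...,n} :: nat set,
  with 0 playing the role of the base point *. A pointed map
  \<langle>m\<rangle>_* \<rightarrow> \<langle>n\<rangle>_* is a function alpha :: nat \<Rightarrow> nat with alpha 0 = 0
  and alpha i \<in> {0..n} for i \<in> {1..m} (values outside {0..m} are irrelevant).\<close>

definition pos_tuple :: "nat list \<Rightarrow> bool" where
  "pos_tuple xs \<longleftrightarrow> (\<forall>x\<in>set xs. 0 < x)"

definition tuple_morphism :: "nat list \<Rightarrow> nat list \<Rightarrow> (nat \<Rightarrow> nat) \<Rightarrow> bool" where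
  "tuple_morphism s t \<alpha> \<longleftrightarrow>
     pos_tuple s \<and> pos_tuple t \<and> \<alpha> 0 = 0 \<and>
     (\<forall>i\<in>{1..length s}. \<alpha> i \<le> length t) \<and>
     (\<forall>i\<in>{1..length s}. \<forall>i'\<in>{1..length s}. \<alpha> i \<noteq> 0 \<and> \<alpha> i = \<alpha> i' \<longrightarrow> i = i') \<and>
     (\<forall>i\<in>{1..length s}. \<alpha> i \<noteq> 0 \<longrightarrow> s ! (i - 1) = t ! (\<alpha> i - 1))"

definition encoded_layout :: "nat list \<Rightarrow> nat list \<Rightarrow> (nat \<Rightarrow> nat) \<Rightarrow> nat list \<times> nat list" where
  "encoded_layout s t \<alpha> =
     (s, map (\<lambda>i. if \<alpha> i = 0 then 0 else prod_list (take (\<alpha> i - 1) t)) [1..<length s + 1])"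

definition flat_layout :: "nat list \<Rightarrow> nat list \<Rightarrow> bool" where
  "flat_layout S D \<longleftrightarrow> pos_tuple S \<and> length S = length D"

text \<open>Modes are pairs (s, d). The order s:d \<preceq> s':d' iff d < d' or (d = d' and s \<le> s')
  is lexicographic order on (d, s); sort is the stable sort by this key.\<close>
definition sort_layout :: "nat list \<Rightarrow> nat list \<Rightarrow> (nat \<times> nat) list" where
  "sort_layout S D = sort_key (\<lambda>(s, d). (d, s)) (zip S D)"

definition tractable :: "nat list \<Rightarrow> nat list \<Rightarrow> bool" where
  "tractable S D \<longleftrightarrow>
     (let M = sort_layout S D in
      \<forall>i. Suc i < length M \<longrightarrow>
          snd (M ! i) = 0 \<or> fst (M ! i) * snd (M ! i) dvd snd (M ! Suc i))"

end

theory Submission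
  imports Defs "HOL-Combinatorics.Permutations"
begin

(* A mode s:d of L_f with \<alpha>(i) = j \<noteq> * is (t_j, t_1 \<cdots> t_(j-1)). For two such modes with
   targets j < j', the product s d = t_1 \<cdots> t_j divides d'. If instead j' < j although
   s:d \<preceq> s':d', then d' t_j' divides d \<le> d', so by positivity t_j' = 1, d = d' and s \<le> s' = 1,
   and divisibility holds again; modes sent to * have stride 0. Hence consecutive modes of
   sort(L_f) satisfy the tractability condition.
   Conversely, zero strides sort first and are sent to *. The remaining sorted modes
   s_1:d_1, ..., s_k:d_k satisfy s_i d_i | d_(i+1) and are realised by
   t = (d_1, s_1, d_2 / (s_1 d_1), s_2, ..., d_k / (s_(k-1) d_(k-1)), s_k), sending the i-th of
   them to position 2i. Since being of the form L_f is invariant under permuting the modes,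
   it suffices to argue about sort(L). *)

definition stride :: "nat list \<Rightarrow> nat \<Rightarrow> nat" where
  "stride t a = (if a = 0 then 0 else prod_list (take (a - 1) t))"

lemma encoded_layout_eq:
  "encoded_layout s t \<alpha> = (s, map (\<lambda>i. stride t (\<alpha> (Suc i))) [0..<length s])"
proof -
  have "encoded_layout s t \<alpha> = (s, map (\<lambda>i. stride t (\<alpha> i)) [1..<length s + 1])"
    unfolding encoded_layout_def stride_def ..
  also have "[1..<length s + 1] = map Suc [0..<length s]"
    by (simp add: map_Suc_upt)
  finally show ?thesis
    by (simp add: comp_def)
qed

lemma encoded_layout_eq_iff:
  "encoded_layout s t \<alpha> = (S, D) \<longleftrightarrow>
     S = s \<and> length D = length s \<and> (\<forall>i<length s. D ! i = stride t (\<alpha> (Suc i)))"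
  unfolding encoded_layout_eq by (auto intro: nth_equalityI)

lemma tuple_morphism_iff_nth:
  "tuple_morphism s t \<alpha> \<longleftrightarrow>
     pos_tuple s \<and> pos_tuple t \<and> \<alpha> 0 = 0 \<and>
     (\<forall>i<length s. \<alpha> (Suc i) \<le> length t \<and> (\<alpha> (Suc i) \<noteq> 0 \<longrightarrow> s ! i = t ! (\<alpha> (Suc i) - 1))) \<and>
     (\<forall>i<length s. \<forall>j<length s. \<alpha> (Suc i) \<noteq> 0 \<and> \<alpha> (Suc i) = \<alpha> (Suc j) \<longrightarrow> i = j)"
proof -
  have "{1..length s} = Suc ` {..<length s}"
    by (simp add: image_Suc_lessThan)
  then show ?thesis
    unfolding tuple_morphism_def by auto
qed

text \<open>Layouts are handled as lists of modes (s, d). Positions are 0-indexed here: \<beta> i stands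
  for \<alpha> (i + 1), and the value 0 still encodes the base point *.\<close>

definition realizes :: "nat list \<Rightarrow> (nat \<Rightarrow> nat) \<Rightarrow> (nat \<times> nat) list \<Rightarrow> bool" where
  "realizes t \<beta> M \<longleftrightarrow> pos_tuple t \<and>
     (\<forall>i<length M. \<beta> i \<le> length t \<and> (\<beta> i \<noteq> 0 \<longrightarrow> fst (M ! i) = t ! (\<beta> i - 1)) \<and>
        snd (M ! i) = stride t (\<beta> i)) \<and>
     (\<forall>i<length M. \<forall>j<length M. \<beta> i \<noteq> 0 \<and> \<beta> i = \<beta> j \<longrightarrow> i = j)"

definition encodable :: "(nat \<times> nat) list \<Rightarrow> bool" where
  "encodable M \<longleftrightarrow> pos_tuple (map fst M) \<and> (\<exists>t \<beta>. realizes t \<beta> M)"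

lemma ex_tuple_morphism_iff_encodable:
  assumes "length S = length D"
  shows "(\<exists>s t \<alpha>. tuple_morphism s t \<alpha> \<and> encoded_layout s t \<alpha> = (S, D)) \<longleftrightarrow> encodable (zip S D)"
proof
  assume "\<exists>s t \<alpha>. tuple_morphism s t \<alpha> \<and> encoded_layout s t \<alpha> = (S, D)"
  then obtain t \<alpha> where "tuple_morphism S t \<alpha>" "\<forall>i<length S. D ! i = stride t (\<alpha> (Suc i))"
    by (auto simp: encoded_layout_eq_iff)
  then have "pos_tuple S" "realizes t (\<lambda>i. \<alpha> (Suc i)) (zip S D)"
    using assms unfolding tuple_morphism_iff_nth realizes_def by auto
  then show "encodable (zip S D)"
    using assms unfolding encodable_def by auto
next
  assume "encodable (zip S D)"
  then obtain t \<beta> where "pos_tuple S" "realizes t \<beta> (zip S D)"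
    using assms unfolding encodable_def by auto
  then have "tuple_morphism S t (case_nat 0 \<beta>) \<and> encoded_layout S t (case_nat 0 \<beta>) = (S, D)"
    using assms unfolding tuple_morphism_iff_nth encoded_layout_eq_iff realizes_def by simp
  then show "\<exists>s t \<alpha>. tuple_morphism s t \<alpha> \<and> encoded_layout s t \<alpha> = (S, D)"
    by blast
qed

lemma realizes_permute_list:
  assumes "realizes t \<beta> M" and p: "p permutes {..<length M}"
  shows "realizes t (\<beta> \<circ> p) (permute_list p M)"
proof -
  have p_lt: "p i < length M" if "i < length M" for i
    using permutes_in_image[OF p] that by simp
  have "pos_tuple t"
    using assms(1) unfolding realizes_def by blast
  moreover have "\<forall>i<length M. \<beta> (p i) \<le> length t \<and>
      (\<beta> (p i) \<noteq> 0 \<longrightarrow> fst (permute_list p M ! i) = t ! (\<beta> (p i) - 1)) \<and>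
      snd (permute_list p M ! i) = stride t (\<beta> (p i))"
    using assms(1) p_lt unfolding realizes_def by (simp add: permute_list_nth[OF p])
  moreover have "i = j" if "i < length M" "j < length M" "\<beta> (p i) \<noteq> 0" "\<beta> (p i) = \<beta> (p j)" for i j
  proof -
    have "p i = p j"
      using assms(1) p_lt[OF that(1)] p_lt[OF that(2)] that(3,4) unfolding realizes_def by blast
    then show "i = j"
      using permutes_inj[OF p] by (simp add: inj_eq)
  qed
  ultimately show ?thesis
    unfolding realizes_def by simp
qed

lemma encodable_perm:
  assumes "encodable M" and "mset M' = mset M"
  shows "encodable M'"
proof -
  obtain t \<beta> where "realizes t \<beta> M"
    using assms(1) unfolding encodable_def by blast
  moreover obtain p where "p permutes {..<length M}" and "permute_list p M = M'"
    using mset_eq_permutation[OF assms(2)] by blast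
  ultimately have "realizes t (\<beta> \<circ> p) M'"
    using realizes_permute_list by blast
  moreover have "pos_tuple (map fst M')"
    using assms(1) mset_eq_setD[OF assms(2)] unfolding encodable_def by (simp add: pos_tuple_def)
  ultimately show ?thesis
    unfolding encodable_def by blast
qed

definition mode_dvd :: "nat \<times> nat \<Rightarrow> nat \<times> nat \<Rightarrow> bool" where
  "mode_dvd x y \<longleftrightarrow> fst x * snd x dvd snd y"

lemma tractable_iff_successively:
  "tractable S D \<longleftrightarrow> successively (\<lambda>x y. snd x = 0 \<or> mode_dvd x y) (sort_layout S D)"
  by (simp add: tractable_def Let_def successively_conv_nth mode_dvd_def)

lemma sort_layout_eq_sort_key_swap: "sort_layout S D = sort_key prod.swap (zip S D)"
proof -
  have "(\<lambda>(s, d). (d, s)) = (prod.swap :: nat \<times> nat \<Rightarrow> _)"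
    by auto
  then show ?thesis
    by (simp add: sort_layout_def)
qed

lemma prod_list_take_dvd:
  fixes xs :: "'a::comm_monoid_mult list"
  assumes "m \<le> n"
  shows "prod_list (take m xs) dvd prod_list (take n xs)"
proof -
  have "take n xs = take m xs @ take (n - m) (drop m xs)"
    using assms by (metis le_add_diff_inverse take_add)
  then show ?thesis
    by (metis dvd_triv_left prod_list.append)
qed

lemma prod_list_take_Suc:
  fixes xs :: "'a::comm_monoid_mult list"
  assumes "k < length xs"
  shows "prod_list (take (Suc k) xs) = prod_list (take k xs) * xs ! k"
  using assms by (simp add: take_Suc_conv_app_nth)

lemma prod_list_take_pos:
  assumes "pos_tuple t"
  shows "0 < prod_list (take k t)"
proof -
  have "0 \<notin> set (take k t)"
    using assms by (auto simp: pos_tuple_def dest: in_set_takeD)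
  then show ?thesis
    by (metis gr0I prod_list_zero_iff)
qed

lemma prod_list_take_mode_dvd:
  assumes t: "pos_tuple t" and ab: "a < length t" "b < length t" "a \<noteq> b"
    and le: "(prod_list (take a t), t ! a) \<le> (prod_list (take b t), t ! b)"
  shows "t ! a * prod_list (take a t) dvd prod_list (take b t)"
proof (cases "a < b")
  case True
  then have "prod_list (take (Suc a) t) dvd prod_list (take b t)"
    by (intro prod_list_take_dvd) simp
  then show ?thesis
    using ab(1) by (simp add: prod_list_take_Suc mult.commute)
next
  case False
  let ?Pa = "prod_list (take a t)" and ?Pb = "prod_list (take b t)"
  have "prod_list (take (Suc b) t) dvd ?Pa"
    using False ab(3) by (intro prod_list_take_dvd) simp
  then have dvd: "?Pb * t ! b dvd ?Pa"
    using ab(2) by (simp add: prod_list_take_Suc)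
  have pos: "0 < ?Pa" "0 < ?Pb" "0 < t ! a" "0 < t ! b"
    using t ab(1,2) by (simp_all add: prod_list_take_pos pos_tuple_def)
  have "?Pa \<le> ?Pb"
    using le by auto
  moreover have "?Pb * t ! b \<le> ?Pa"
    using dvd pos(1) by (rule dvd_imp_le)
  ultimately have "?Pb * t ! b \<le> ?Pb * 1"
    by linarith
  then have "t ! b = 1"
    using pos(2,4) by simp
  with \<open>?Pa \<le> ?Pb\<close> \<open>?Pb * t ! b \<le> ?Pa\<close> have "?Pa = ?Pb"
    by simp
  then have "t ! a = 1"
    using le pos(3) \<open>t ! b = 1\<close> by simp
  then show ?thesis
    using \<open>?Pa = ?Pb\<close> by simp
qed

lemma realizes_mode_dvd:
  assumes "realizes t \<beta> M" and ij: "i < length M" "j < length M" "i \<noteq> j"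
    and le: "prod.swap (M ! i) \<le> prod.swap (M ! j)"
  shows "snd (M ! i) = 0 \<or> mode_dvd (M ! i) (M ! j)"
proof -
  have \<beta>i: "\<beta> i \<le> length t" "\<beta> i \<noteq> 0 \<Longrightarrow> fst (M ! i) = t ! (\<beta> i - 1)" "snd (M ! i) = stride t (\<beta> i)"
    and \<beta>j: "\<beta> j \<le> length t" "\<beta> j \<noteq> 0 \<Longrightarrow> fst (M ! j) = t ! (\<beta> j - 1)" "snd (M ! j) = stride t (\<beta> j)"
    using assms(1) ij(1,2) unfolding realizes_def by simp_all
  have snd_le: "snd (M ! i) \<le> snd (M ! j)"
    using le by (auto simp: prod.swap_def less_eq_prod_def)
  show ?thesis
  proof (cases "\<beta> i = 0 \<or> \<beta> j = 0")
    case True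
    then have "snd (M ! i) = 0"
      using \<beta>i(3) \<beta>j(3) snd_le by (auto simp: stride_def)
    then show ?thesis ..
  next
    case False
    define a b where "a = \<beta> i - 1" and "b = \<beta> j - 1"
    have "\<beta> i \<noteq> \<beta> j"
      using assms(1) ij False unfolding realizes_def by blast
    then have ab: "a < length t" "b < length t" "a \<noteq> b"
      using False \<beta>i(1) \<beta>j(1) unfolding a_def b_def by auto
    have Mi: "M ! i = (t ! a, prod_list (take a t))" and Mj: "M ! j = (t ! b, prod_list (take b t))"
      using False \<beta>i \<beta>j unfolding a_def b_def by (simp_all add: stride_def prod_eq_iff)
    have "pos_tuple t"
      using assms(1) unfolding realizes_def by blast
    moreover have "(prod_list (take a t), t ! a) \<le> (prod_list (take b t), t ! b)"
      using le unfolding Mi Mj by simp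
    ultimately have "t ! a * prod_list (take a t) dvd prod_list (take b t)"
      using ab by (intro prod_list_take_mode_dvd)
    then show ?thesis
      unfolding mode_dvd_def Mi Mj by simp
  qed
qed

lemma successively_mode_dvd_if_encodable:
  assumes "encodable M" and "sorted (map prod.swap M)"
  shows "successively (\<lambda>x y. snd x = 0 \<or> mode_dvd x y) M"
  unfolding successively_conv_nth
proof (intro allI impI)
  fix i
  assume i: "Suc i < length M"
  obtain t \<beta> where "realizes t \<beta> M"
    using assms(1) unfolding encodable_def by blast
  moreover have "prod.swap (M ! i) \<le> prod.swap (M ! Suc i)"
    using sorted_nth_mono[OF assms(2), of i "Suc i"] i by simp
  ultimately show "snd (M ! i) = 0 \<or> mode_dvd (M ! i) (M ! Suc i)"
    using i by (intro realizes_mode_dvd) simp_all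
qed

lemma tractable_if_encodable:
  assumes "encodable (zip S D)"
  shows "tractable S D"
proof -
  have "encodable (sort_key prod.swap (zip S D))"
    using assms by (rule encodable_perm) simp
  then show ?thesis
    unfolding tractable_iff_successively sort_layout_eq_sort_key_swap
    by (rule successively_mode_dvd_if_encodable) simp
qed

text \<open>The accumulator p is the product of the entries emitted so far. Along a chain it is
  s_(i-1) d_(i-1) when (s_i, d_i) is processed, so the prefix product in front of s_i is d_i.\<close>

fun chain_tuple :: "nat \<Rightarrow> (nat \<times> nat) list \<Rightarrow> nat list" where
  "chain_tuple p [] = []"
| "chain_tuple p ((s, d) # M) = d div p # s # chain_tuple (s * d) M"

lemma length_chain_tuple [simp]: "length (chain_tuple p M) = 2 * length M"
  by (induction p M rule: chain_tuple.induct) simp_all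

lemma chain_tuple_nth_odd:
  "k < length M \<Longrightarrow> chain_tuple p M ! (2 * k + 1) = fst (M ! k)"
proof (induction p M arbitrary: k rule: chain_tuple.induct)
  case (2 p s d M)
  then show ?case
    by (cases k) simp_all
qed simp

lemma successively_mode_dvd_Cons_Cons:
  "successively mode_dvd ((1, p) # (s, d) # M) \<longleftrightarrow> p dvd d \<and> successively mode_dvd ((1, s * d) # M)"
  by (cases M) (simp_all add: mode_dvd_def)

lemma prod_list_take_chain_tuple:
  "successively mode_dvd ((1, p) # M) \<Longrightarrow> k < length M \<Longrightarrow>
     p * prod_list (take (2 * k + 1) (chain_tuple p M)) = snd (M ! k)"
proof (induction p M arbitrary: k rule: chain_tuple.induct)
  case (2 p s d M)
  have "p dvd d" and IH: "\<And>k. k < length M \<Longrightarrow>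
      s * d * prod_list (take (2 * k + 1) (chain_tuple (s * d) M)) = snd (M ! k)"
    using "2.prems"(1) "2.IH" unfolding successively_mode_dvd_Cons_Cons by simp_all
  then show ?case
  proof (cases k)
    case (Suc k')
    then have "p * prod_list (take (2 * k + 1) (chain_tuple p ((s, d) # M)))
        = (p * (d div p)) * s * prod_list (take (2 * k' + 1) (chain_tuple (s * d) M))"
      by (simp add: algebra_simps)
    also have "\<dots> = snd (((s, d) # M) ! k)"
      using \<open>p dvd d\<close> IH "2.prems"(2) Suc by (simp add: mult.commute)
    finally show ?thesis .
  qed simp
qed simp

lemma pos_tuple_chain_tuple:
  "successively mode_dvd ((1, p) # M) \<Longrightarrow> \<forall>x\<in>set M. 0 < fst x \<and> 0 < snd x \<Longrightarrow>
     pos_tuple (chain_tuple p M)"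
proof (induction p M rule: chain_tuple.induct)
  case (2 p s d M)
  have "p dvd d" "0 < d" "pos_tuple (chain_tuple (s * d) M)"
    using "2.prems" "2.IH" unfolding successively_mode_dvd_Cons_Cons by simp_all
  then show ?case
    using "2.prems"(2) by (auto simp: pos_tuple_def elim!: dvdE)
qed (simp add: pos_tuple_def)

lemma sorted_snd_sort_layout: "sorted (map snd (sort_layout S D))"
proof -
  have "sorted_wrt (\<lambda>x y. prod.swap x \<le> prod.swap y) (sort_layout S D)"
    using sorted_sort_key[of prod.swap "zip S D"] unfolding sort_layout_eq_sort_key_swap sorted_map .
  then show ?thesis
    unfolding sorted_map by (rule sorted_wrt_mono_rel[rotated]) (auto simp: less_eq_prod_def)
qed

lemma snd_pos_if_in_dropWhile_zero:
  fixes M :: "('a \<times> nat) list"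
  assumes "sorted (map snd M)" and x: "x \<in> set (dropWhile (\<lambda>x. snd x = 0) M)"
  shows "0 < snd x"
proof (cases "dropWhile (\<lambda>x. snd x = 0) M")
  case (Cons y N)
  have "sorted (map snd (dropWhile (\<lambda>x. snd x = 0) M))"
    using sorted_dropWhile[OF assms(1), of "\<lambda>d. d = 0"] by (simp add: dropWhile_map comp_def)
  then have "snd y \<le> snd x"
    using x Cons by auto
  moreover have "snd y \<noteq> 0"
    using hd_dropWhile[of "\<lambda>x. snd x = 0" M] Cons by simp
  ultimately show ?thesis
    by simp
next
  case Nil
  then show ?thesis
    using x by (simp only: empty_iff list.set(1))
qed

text \<open>Truncated subtraction makes 2 * (Suc i - length Z) vanish, i.e. sends the i-th mode to *,
  exactly on the positions of Z.\<close>

lemma realizes_zero_strides_append_chain: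
  assumes Z: "\<forall>x\<in>set Z. snd x = 0"
    and N: "\<forall>x\<in>set N. 0 < fst x \<and> 0 < snd x" and chain: "successively mode_dvd N"
  shows "realizes (chain_tuple 1 N) (\<lambda>i. 2 * (Suc i - length Z)) (Z @ N)"
proof -
  let ?t = "chain_tuple 1 N" and ?\<beta> = "\<lambda>i. 2 * (Suc i - length Z)"
  have chain1: "successively mode_dvd ((1, 1) # N)"
    using chain by (cases N) (simp_all add: mode_dvd_def)
  have mode: "?\<beta> i \<le> length ?t \<and> (?\<beta> i \<noteq> 0 \<longrightarrow> fst ((Z @ N) ! i) = ?t ! (?\<beta> i - 1)) \<and>
      snd ((Z @ N) ! i) = stride ?t (?\<beta> i)" if i: "i < length (Z @ N)" for i
  proof (cases "i < length Z")
    case True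
    then show ?thesis
      using Z by (simp add: stride_def nth_append)
  next
    case False
    define k where "k = i - length Z"
    have k: "k < length N" "(Z @ N) ! i = N ! k" "?\<beta> i = 2 * k + 2"
      using i False unfolding k_def by (auto simp: nth_append)
    have "prod_list (take (2 * k + 1) ?t) = snd (N ! k)"
      using prod_list_take_chain_tuple[OF chain1 k(1)] by simp
    then show ?thesis
      using k chain_tuple_nth_odd[OF k(1), of 1] by (simp add: stride_def)
  qed
  have "pos_tuple ?t"
    using chain1 N by (rule pos_tuple_chain_tuple)
  then show ?thesis
    unfolding realizes_def using mode by auto
qed

lemma encodable_if_tractable:
  assumes "pos_tuple S" and "tractable S D"
  shows "encodable (zip S D)"
proof -
  define M where "M = sort_layout S D"
  define Z where "Z = takeWhile (\<lambda>x. snd x = 0) M"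
  define N where "N = dropWhile (\<lambda>x. snd x = 0) M"
  have M: "M = Z @ N"
    unfolding Z_def N_def by simp
  have mset: "mset M = mset (zip S D)"
    unfolding M_def sort_layout_eq_sort_key_swap by simp
  have fst_pos: "0 < fst x" if "x \<in> set M" for x
  proof -
    have "fst x \<in> set S"
      using that mset_eq_setD[OF mset] by (metis prod.collapse set_zip_leftD)
    with assms(1) show ?thesis
      by (simp add: pos_tuple_def)
  qed
  have snd_N_pos: "0 < snd x" if "x \<in> set N" for x
    using sorted_snd_sort_layout that unfolding N_def M_def by (rule snd_pos_if_in_dropWhile_zero)
  have "successively (\<lambda>x y. snd x = 0 \<or> mode_dvd x y) N"
    using assms(2) unfolding tractable_iff_successively M_def[symmetric] M
    by (simp add: successively_append_iff)
  then have "successively mode_dvd N"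
    by (rule successively_mono) (auto dest: snd_N_pos)
  moreover have "\<forall>x\<in>set Z. snd x = 0"
    unfolding Z_def by (auto dest: set_takeWhileD)
  moreover have "\<forall>x\<in>set N. 0 < fst x \<and> 0 < snd x"
    using fst_pos snd_N_pos unfolding M by simp
  ultimately have "realizes (chain_tuple 1 N) (\<lambda>i. 2 * (Suc i - length Z)) M"
    unfolding M by (intro realizes_zero_strides_append_chain)
  moreover have "pos_tuple (map fst M)"
    using fst_pos by (auto simp: pos_tuple_def)
  ultimately have "encodable M"
    unfolding encodable_def by blast
  then show ?thesis
    using mset[symmetric] by (rule encodable_perm)
qed

theorem mainTheorem8:
  fixes S D :: "nat list"
  assumes "flat_layout S D"
  shows "(\<exists>s t \<alpha>. tuple_morphism s t \<alpha> \<and> encoded_layout s t \<alpha> = (S, D)) \<longleftrightarrow> tractable S D"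
proof -
  have "pos_tuple S" and "length S = length D"
    using assms by (simp_all add: flat_layout_def)
  then show ?thesis
    unfolding ex_tuple_morphism_iff_encodable[OF \<open>length S = length D\<close>]
    using tractable_if_encodable encodable_if_tractable by blast
qed

end
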